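(* Let $\Omega\subset \mathbb R^{n+m}$ be open and convex, with $\Omega_x$ connected for all $x$. Let $f:\Omega\to \mathbb R$ and suppose there are $\kappa\ge 0$ and $\sigma>0$ such that $(x,y)\mapsto f(x,y) + \frac{\kappa}{2} \|x\|^2-\sigma \|y\|^2$ is convex on $\Omega$, and $\operatorname{argmin}_f(x)$ is non-empty for all $x\in \pi(\Omega)$. Then: (i) the function $g(x):=\inf_{y\in\Omega_x} f(x,y)$, $x\in\pi(\Omega)$, is $\kappa$-semiconvex, and $\operatorname{argmin}_f(x)$ is a single point $\gamma(x)$ for all $x\in\pi(\Omega)$, so that $g(x)=f(x,\gamma(x))$; (ii) given any $x_0\in \pi(\Omega)$ and $u_0\in \nabla_{x_0}^{\kappa} g$ there exists a Lipschitz function $\phi:V\to \mathbb R^m$ defined on a neighbourhood $V$ of $(x_0,u_0)$ in $\mathbb R^{2n}$ such that $\gamma(x) = \phi(x,u)$ for all $(x,u)\in V$ with $u\in \nabla^\kappa_{x} g$; (iii) $\gamma$ is calm almost everywhere: for almost all $x_0\in \pi(\Omega)$ there are $C$ and $\delta>0$ such that $\|\gamma(x) - \gamma(x_0)\| \le C \| x-x_0\|$ whenever $\|x-x_0\|<\delta$.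
   Context: $\pi:\mathbb R^{n+m}\to\mathbb R^n$ is the projection and $\Omega_x=\{y\in\mathbb R^m:(x,y)\in\Omega\}$. For $f:\Omega\to\mathbb R$, $\operatorname{argmin}_f(x)=\{\gamma\in\Omega_x: \inf_{y\in\Omega_x}f(x,y)=f(x,\gamma)\}$ (possibly empty). A function $g$ is $\kappa$-semiconvex if $g(x)+\frac\kappa2\|x\|^2$ is convex. For $g$ defined near $x_0$ and $\kappa\in\mathbb R$, $\nabla^\kappa_{x_0}g=\{u\in\mathbb R^n: g(x)-g(x_0)\ge u\cdot(x-x_0)-\frac\kappa2\|x-x_0\|^2 \text{ for all } x \text{ sufficiently near } x_0\}$. *)

theory Defs
  imports "HOL-Analysis.Analysis"
begin

text \<open>Fibre of \<Omega> over x: \<Omega>_x = {y. (x,y) \<in> \<Omega>}.  \<R>^(n+m) is modelled as 'n \<times> 'm.\<close>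
definition fibre :: "('n \<times> 'm) set \<Rightarrow> 'n \<Rightarrow> 'm set" where
  "fibre \<Omega> x = {y. (x, y) \<in> \<Omega>}"

definition argmin_set :: "('n \<times> 'm \<Rightarrow> real) \<Rightarrow> ('n \<times> 'm) set \<Rightarrow> 'n \<Rightarrow> 'm set" where
  "argmin_set f \<Omega> x = {\<gamma> \<in> fibre \<Omega> x. \<forall>y \<in> fibre \<Omega> x. f (x, \<gamma>) \<le> f (x, y)}"

definition semiconvex_on :: "real \<Rightarrow> 'a::real_normed_vector set \<Rightarrow> ('a \<Rightarrow> real) \<Rightarrow> bool" where
  "semiconvex_on \<kappa> S g \<longleftrightarrow> convex_on S (\<lambda>x. g x + \<kappa> / 2 * (norm x)\<^sup>2)"

definition semi_subdiff :: "real \<Rightarrow> ('a::real_inner \<Rightarrow> real) \<Rightarrow> 'a \<Rightarrow> 'a set" where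
  "semi_subdiff \<kappa> g x0 = {u. \<exists>e>0. \<forall>x. dist x x0 < e \<longrightarrow>
      g x - g x0 \<ge> inner u (x - x0) - \<kappa> / 2 * (norm (x - x0))\<^sup>2}"

end

theory Submission
  imports Defs
begin

(* Let F(x, y) = f(x, y) + kappa/2 |x|^2, which is convex and sigma-strongly convex in y, and let
   G = g + kappa/2 |.|^2 be its minimum over y.  Minimising over y preserves convexity, and the
   strong convexity survives as a defect: if y_i minimises F(x_i, .), then
     sigma/4 |y1 - y2|^2 <= (G x1 + G x2)/2 - G((x1 + x2)/2).
   For x1 = x2 this makes the minimiser gamma(x) unique.  Bounding the right-hand side by
   <p1 - p2, x1 - x2>/4 for subgradients p_i = u_i + kappa x_i of G makes gamma Lipschitz in
   (x, u) on the graph of the semi-subdifferential (then extend by McShane).  Bounding it by half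
   the second difference G(x2 + h) + G(x2 - h) - 2 G(x2), h = x1 - x2, reduces calmness to an upper
   bound C |h|^2 on the second difference, which a convex function has almost everywhere: in one
   variable by a Vitali covering argument, in general along coordinate lines (Fubini) and then in
   all directions, since h |-> G(x + h) + G(x - h) - 2 G(x) is itself convex. *)

section \<open>Second differences\<close>

definition second_difference :: "('a::real_vector \<Rightarrow> real) \<Rightarrow> 'a \<Rightarrow> 'a \<Rightarrow> real" where
  "second_difference f x h = f (x + h) + f (x - h) - 2 * f x"

definition second_difference_bounded_at :: "('a::real_normed_vector \<Rightarrow> real) \<Rightarrow> 'a \<Rightarrow> bool" where
  "second_difference_bounded_at f x \<longleftrightarrow>
     (\<exists>C \<delta>. \<delta> > 0 \<and> (\<forall>h. norm h < \<delta> \<longrightarrow> second_difference f x h \<le> C * (norm h)\<^sup>2))"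

lemma second_difference_zero [simp]: "second_difference f x 0 = 0"
  by (simp add: second_difference_def)

lemma second_difference_uminus: "second_difference f x (- h) = second_difference f x h"
  by (simp add: second_difference_def)

lemma second_difference_along:
  "second_difference (\<lambda>s. f (x + s *\<^sub>R b)) t h = second_difference f (x + t *\<^sub>R b) (h *\<^sub>R b)"
  by (simp add: second_difference_def algebra_simps)

lemma second_difference_bounded_at_along_iff:
  fixes f :: "'a::real_vector \<Rightarrow> real"
  shows "second_difference_bounded_at (\<lambda>s. f (x + s *\<^sub>R b)) t \<longleftrightarrow>
   second_difference_bounded_at (\<lambda>s. f ((x + t *\<^sub>R b) + s *\<^sub>R b)) 0"
  by (simp add: second_difference_bounded_at_def second_difference_along)

lemma not_second_difference_bounded_atD:
  fixes \<phi> :: "real \<Rightarrow> real"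
  assumes "\<not> second_difference_bounded_at \<phi> t" and "\<delta> > 0"
  obtains s where "0 < s" "s < \<delta>" "C * s\<^sup>2 < second_difference \<phi> t s"
proof -
  from assms obtain h where h: "\<bar>h\<bar> < \<delta>" "C * h\<^sup>2 < second_difference \<phi> t h"
    unfolding second_difference_bounded_at_def by (auto simp: not_le)
  then have "h \<noteq> 0" by (auto simp: second_difference_def)
  have "second_difference \<phi> t \<bar>h\<bar> = second_difference \<phi> t h"
    by (cases "h \<ge> 0") (auto simp: second_difference_uminus)
  with h \<open>h \<noteq> 0\<close> show ?thesis by (intro that[of "\<bar>h\<bar>"]) auto
qed

section \<open>Convex functions of one variable\<close>

lemma convex_on_slope_mono:
  fixes f :: "real \<Rightarrow> real"
  assumes f: "convex_on I f" and "a \<in> I" "d \<in> I"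
    and "a < b" "c < d" "a \<le> c" "b \<le> d"
  shows "(f b - f a) / (b - a) \<le> (f d - f c) / (d - c)"
proof -
  have slope_swap: "(p - q) / (r - s) = (q - p) / (s - r)" for p q r s :: real
    by (metis minus_diff_eq minus_divide_divide)
  have "(f b - f a) / (b - a) \<le> (f d - f a) / (d - a)"
  proof (cases "b = d")
    case False
    with assms have "b < d" by auto
    from convex_on_slope_le(1)[OF f \<open>a \<in> I\<close> \<open>d \<in> I\<close> \<open>a < b\<close> this] show ?thesis
      by (simp add: slope_swap)
  qed simp
  also have "\<dots> \<le> (f d - f c) / (d - c)"
  proof (cases "a = c")
    case False
    with assms have "a < c" by auto
    from convex_on_slope_le(2)[OF f \<open>a \<in> I\<close> \<open>d \<in> I\<close> this \<open>c < d\<close>] show ?thesis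
      by (simp add: slope_swap)
  qed simp
  finally show ?thesis .
qed

lemma disjnt_balls_real_le:
  fixes a b r s :: real
  assumes "disjnt (ball a r) (ball b s)" "a \<le> b" "r > 0" "s > 0"
  shows "a + r \<le> b - s"
proof (rule ccontr)
  assume "\<not> a + r \<le> b - s"
  moreover have "a \<noteq> b"
    using assms(1,3,4) by (metis centre_in_ball disjnt_iff)
  ultimately have "(max a (b - s) + min (a + r) b) / 2 \<in> ball a r \<inter> ball b s"
    using assms by (auto simp: dist_real_def max_def min_def field_simps)
  with assms(1) show False by (auto simp: disjnt_def)
qed

lemma sum_chained_differences_le:
  fixes R L :: "'a \<Rightarrow> real" and key :: "'a \<Rightarrow> 'b::linorder"
  assumes "finite F" "F \<noteq> {}" and lower: "\<And>i. i \<in> F \<Longrightarrow> m \<le> L i"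
    and chain: "\<And>i j. i \<in> F \<Longrightarrow> j \<in> F \<Longrightarrow> key i \<le> key j \<Longrightarrow> i \<noteq> j \<Longrightarrow> R i \<le> L j"
  shows "\<exists>z\<in>F. (\<Sum>i\<in>F. R i - L i) \<le> R z - m"
proof -
  have "S \<subseteq> F \<Longrightarrow> S \<noteq> {} \<Longrightarrow> \<exists>z\<in>S. (\<Sum>i\<in>S. R i - L i) \<le> R z - m" if "finite S" for S
    using that
  proof (induction S rule: finite_ranking_induct[where f = key])
    case (insert x S)
    consider "S = {}" | "x \<in> S" | "S \<noteq> {}" "x \<notin> S" by blast
    then show ?case
    proof cases
      case 1
      with insert.prems lower show ?thesis by auto
    next
      case 2
      with insert show ?thesis by (simp add: insert_absorb)
    next
      case 3
      with insert obtain z where z: "z \<in> S" "(\<Sum>i\<in>S. R i - L i) \<le> R z - m" by auto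
      have "R z \<le> L x" using insert z 3 by (intro chain) auto
      with z 3 insert(1) show ?thesis by (intro bexI[of _ x]) auto
    qed
  qed simp
  with assms(1,2) show ?thesis by blast
qed

text \<open>\<open>second_difference \<phi> t s / s\<close> is the jump between the secant slopes of \<open>\<phi>\<close> on \<open>[t - s, t]\<close> and
  \<open>[t, t + s]\<close>; over disjoint intervals these jumps telescope.\<close>
lemma convex_on_sum_slope_jumps_le:
  fixes \<phi> :: "real \<Rightarrow> real" and F :: "(real \<times> real) set"
  assumes cvx: "convex_on {c - \<eta>..d + \<eta>} \<phi>" and "\<eta> > 0" "c \<le> d" and "finite F"
    and F: "\<And>i. i \<in> F \<Longrightarrow> fst i \<in> {c..d} \<and> 0 < snd i \<and> snd i \<le> \<eta>"
    and disj: "pairwise (\<lambda>i j. disjnt (ball (fst i) (snd i)) (ball (fst j) (snd j))) F"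
  shows "(\<Sum>i\<in>F. second_difference \<phi> (fst i) (snd i) / snd i)
     \<le> (\<phi> (d + \<eta>) - \<phi> d) / \<eta> - (\<phi> c - \<phi> (c - \<eta>)) / \<eta>"
proof -
  define R where "R i = (\<phi> (fst i + snd i) - \<phi> (fst i)) / snd i" for i
  define L where "L i = (\<phi> (fst i) - \<phi> (fst i - snd i)) / snd i" for i
  define M where "M = (\<phi> (d + \<eta>) - \<phi> d) / \<eta>"
  define m where "m = (\<phi> c - \<phi> (c - \<eta>)) / \<eta>"
  have slope_mono: "(\<phi> b' - \<phi> a) / (b' - a) \<le> (\<phi> d' - \<phi> c') / (d' - c')"
    if "c - \<eta> \<le> a" "d' \<le> d + \<eta>" "a < b'" "c' < d'" "a \<le> c'" "b' \<le> d'" for a b' c' d'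
    using that by (intro convex_on_slope_mono[OF cvx]) auto
  have R_le_M: "R i \<le> M" if "i \<in> F" for i
  proof -
    have "(\<phi> (fst i + snd i) - \<phi> (fst i)) / ((fst i + snd i) - fst i) \<le> (\<phi> (d + \<eta>) - \<phi> d) / ((d + \<eta>) - d)"
      using F[OF that] \<open>\<eta> > 0\<close> by (intro slope_mono) auto
    then show ?thesis by (simp add: R_def M_def)
  qed
  have m_le_L: "m \<le> L i" if "i \<in> F" for i
  proof -
    have "(\<phi> c - \<phi> (c - \<eta>)) / (c - (c - \<eta>)) \<le> (\<phi> (fst i) - \<phi> (fst i - snd i)) / (fst i - (fst i - snd i))"
      using F[OF that] \<open>\<eta> > 0\<close> by (intro slope_mono) auto
    then show ?thesis by (simp add: L_def m_def)
  qed
  have R_le_L: "R i \<le> L j" if "i \<in> F" "j \<in> F" "fst i \<le> fst j" "i \<noteq> j" for i j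
  proof -
    have "disjnt (ball (fst i) (snd i)) (ball (fst j) (snd j))"
      using disj that unfolding pairwise_def by blast
    then have "fst i + snd i \<le> fst j - snd j"
      using disjnt_balls_real_le F that by blast
    then have "(\<phi> (fst i + snd i) - \<phi> (fst i)) / ((fst i + snd i) - fst i)
        \<le> (\<phi> (fst j) - \<phi> (fst j - snd j)) / (fst j - (fst j - snd j))"
      using F[OF that(1)] F[OF that(2)] by (intro slope_mono) auto
    then show ?thesis by (simp add: R_def L_def)
  qed
  have "(\<phi> c - \<phi> (c - \<eta>)) / (c - (c - \<eta>)) \<le> (\<phi> (d + \<eta>) - \<phi> d) / ((d + \<eta>) - d)"
    using \<open>\<eta> > 0\<close> \<open>c \<le> d\<close> by (intro slope_mono) auto
  then have m_le_M: "m \<le> M" by (simp add: m_def M_def)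
  have "(\<Sum>i\<in>F. second_difference \<phi> (fst i) (snd i) / snd i) = (\<Sum>i\<in>F. R i - L i)"
  proof (rule sum.cong)
    fix i
    have "R i - L i = ((\<phi> (fst i + snd i) - \<phi> (fst i)) - (\<phi> (fst i) - \<phi> (fst i - snd i))) / snd i"
      unfolding R_def L_def by (rule diff_divide_distrib[symmetric])
    also have "\<dots> = second_difference \<phi> (fst i) (snd i) / snd i"
      by (simp add: second_difference_def)
    finally show "second_difference \<phi> (fst i) (snd i) / snd i = R i - L i" ..
  qed simp
  also have "\<dots> \<le> M - m"
  proof (cases "F = {}")
    case False
    have "\<exists>z\<in>F. (\<Sum>i\<in>F. R i - L i) \<le> R z - m"
      by (rule sum_chained_differences_le[where key = fst])
        (use \<open>finite F\<close> False m_le_L R_le_L in auto)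
    then obtain z where "z \<in> F" "(\<Sum>i\<in>F. R i - L i) \<le> R z - m" ..
    with R_le_M[of z] show ?thesis by linarith
  qed (use m_le_M in simp)
  finally show ?thesis by (simp add: M_def m_def)
qed

lemma measure_UN_balls_second_difference_large_le:
  fixes \<phi> :: "real \<Rightarrow> real" and C :: "(real \<times> real) set"
  assumes cvx: "convex_on {c - \<eta>..d + \<eta>} \<phi>" and "\<eta> > 0" "c \<le> d" "N > 0" "countable C"
    and C: "\<And>i. i \<in> C \<Longrightarrow> fst i \<in> {c..d} \<and> 0 < snd i \<and> snd i \<le> \<eta> \<and>
      N * (snd i)\<^sup>2 < second_difference \<phi> (fst i) (snd i)"
    and disj: "pairwise (\<lambda>i j. disjnt (ball (fst i) (snd i)) (ball (fst j) (snd j))) C"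
  shows "(\<Union>i\<in>C. ball (fst i) (snd i)) \<in> lmeasurable"
    and "measure lebesgue (\<Union>i\<in>C. ball (fst i) (snd i))
      \<le> 2 / N * ((\<phi> (d + \<eta>) - \<phi> d) / \<eta> - (\<phi> c - \<phi> (c - \<eta>)) / \<eta>)"
proof -
  have length_le: "2 * snd i \<le> 2 / N * (second_difference \<phi> (fst i) (snd i) / snd i)" if "i \<in> C" for i
  proof -
    from C[OF that] have "0 < snd i" "N * (snd i)\<^sup>2 < second_difference \<phi> (fst i) (snd i)"
      by auto
    with \<open>N > 0\<close> show ?thesis by (simp add: field_simps power2_eq_square)
  qed
  have finite_bound: "measure lebesgue (\<Union>i\<in>I. ball (fst i) (snd i))
      \<le> 2 / N * ((\<phi> (d + \<eta>) - \<phi> d) / \<eta> - (\<phi> c - \<phi> (c - \<eta>)) / \<eta>)"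
    if "I \<subseteq> C" "finite I" for I
  proof -
    have "measure lebesgue (\<Union>i\<in>I. ball (fst i) (snd i)) \<le> (\<Sum>i\<in>I. measure lebesgue (ball (fst i) (snd i)))"
      by (rule measure_UNION_le) (use that in auto)
    also have "\<dots> = (\<Sum>i\<in>I. 2 * snd i)"
      using that C by (intro sum.cong) (force simp: ball_eq_greaterThanLessThan)+
    also have "\<dots> \<le> (\<Sum>i\<in>I. 2 / N * (second_difference \<phi> (fst i) (snd i) / snd i))"
      using that length_le by (intro sum_mono) auto
    also have "\<dots> \<le> 2 / N * ((\<phi> (d + \<eta>) - \<phi> d) / \<eta> - (\<phi> c - \<phi> (c - \<eta>)) / \<eta>)"
      unfolding sum_distrib_left[symmetric] using \<open>N > 0\<close> C that
      by (intro mult_left_mono convex_on_sum_slope_jumps_le[OF cvx \<open>\<eta> > 0\<close> \<open>c \<le> d\<close>]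
          pairwise_subset[OF disj]) auto
    finally show ?thesis .
  qed
  show "(\<Union>i\<in>C. ball (fst i) (snd i)) \<in> lmeasurable"
    by (rule fmeasurable_UN_bound[OF \<open>countable C\<close> _ finite_bound]) simp_all
  show "measure lebesgue (\<Union>i\<in>C. ball (fst i) (snd i))
      \<le> 2 / N * ((\<phi> (d + \<eta>) - \<phi> d) / \<eta> - (\<phi> c - \<phi> (c - \<eta>)) / \<eta>)"
    by (rule measure_UN_bound[OF \<open>countable C\<close> _ finite_bound]) simp_all
qed

text \<open>Vitali covering by intervals on which the second difference is large.\<close>
lemma negligible_second_difference_unbounded_Icc:
  fixes \<phi> :: "real \<Rightarrow> real"
  assumes cvx: "convex_on {c - \<eta>..d + \<eta>} \<phi>" and "\<eta> > 0" "c \<le> d"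
  shows "negligible {t \<in> {c..d}. \<not> second_difference_bounded_at \<phi> t}" (is "negligible ?E")
  unfolding negligible_outer_le
proof (intro allI impI)
  fix e :: real
  assume "e > 0"
  define B where "B = (\<phi> (d + \<eta>) - \<phi> d) / \<eta> - (\<phi> c - \<phi> (c - \<eta>)) / \<eta>"
  define N where "N = 2 * (\<bar>B\<bar> + 1) / e"
  have "N > 0" using \<open>e > 0\<close> by (simp add: N_def)
  define K where "K = {i. fst i \<in> ?E \<and> 0 < snd i \<and> snd i \<le> \<eta> \<and>
    N * (snd i)\<^sup>2 < second_difference \<phi> (fst i) (snd i)}"
  have "\<exists>i. i \<in> K \<and> t \<in> ball (fst i) (snd i) \<and> snd i < \<delta>" if t: "t \<in> ?E" "0 < \<delta>" for t \<delta>
  proof -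
    obtain s where "0 < s" "s < min \<delta> \<eta>" "N * s\<^sup>2 < second_difference \<phi> t s"
      using not_second_difference_bounded_atD[where C = N and \<delta> = "min \<delta> \<eta>"] t \<open>\<eta> > 0\<close> by auto
    with t show ?thesis by (intro exI[of _ "(t, s)"]) (auto simp: K_def)
  qed
  then obtain C where "countable C" "C \<subseteq> K"
    and disj: "pairwise (\<lambda>i j. disjnt (ball (fst i) (snd i)) (ball (fst j) (snd j))) C"
    and rest: "negligible (?E - (\<Union>i\<in>C. ball (fst i) (snd i)))"
    by (rule Vitali_covering_theorem_balls[of ?E K fst snd]) blast
  define U where "U = (\<Union>i\<in>C. ball (fst i) (snd i))"
  have U: "U \<in> lmeasurable" "measure lebesgue U \<le> 2 / N * B"
    unfolding U_def B_def using \<open>C \<subseteq> K\<close>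
    by (intro measure_UN_balls_second_difference_large_le[OF cvx \<open>\<eta> > 0\<close> \<open>c \<le> d\<close> \<open>N > 0\<close>
          \<open>countable C\<close> _ disj]; force simp: K_def)+
  have "B * e \<le> (\<bar>B\<bar> + 1) * e"
    using \<open>e > 0\<close> by (intro mult_right_mono) auto
  then have "2 / N * B \<le> e"
    using \<open>e > 0\<close> by (simp add: N_def field_simps)
  moreover have "(?E - U) \<union> U \<in> lmeasurable"
    using negligible_imp_measurable[OF rest[folded U_def]] U(1) by (rule fmeasurable.Un)
  moreover have "measure lebesgue ((?E - U) \<union> U) \<le> measure lebesgue U"
    using measure_Un_le[OF negligible_imp_sets[OF rest[folded U_def]] fmeasurableD[OF U(1)]]
      negligible_imp_measure0[OF rest[folded U_def]] by simp
  ultimately show "\<exists>T. ?E \<subseteq> T \<and> T \<in> lmeasurable \<and> measure lebesgue T \<le> e"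
    using U(2) by (intro exI[of _ "(?E - U) \<union> U"]) auto
qed

lemma negligible_second_difference_unbounded:
  fixes \<phi> :: "real \<Rightarrow> real"
  assumes "open I" and cvx: "convex_on I \<phi>"
  shows "negligible {t \<in> I. \<not> second_difference_bounded_at \<phi> t}" (is "negligible ?S")
  unfolding locally_negligible_alt[of ?S]
proof
  fix t0
  assume "t0 \<in> ?S"
  then obtain r where "r > 0" "ball t0 r \<subseteq> I"
    using \<open>open I\<close> open_contains_ball by blast
  define \<epsilon> where "\<epsilon> = r / 3"
  have "\<epsilon> > 0" using \<open>r > 0\<close> by (simp add: \<epsilon>_def)
  have "{(t0 - \<epsilon>) - \<epsilon>..(t0 + \<epsilon>) + \<epsilon>} \<subseteq> I"
    using \<open>ball t0 r \<subseteq> I\<close> \<open>r > 0\<close> by (auto simp: \<epsilon>_def dist_real_def subset_iff)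
  then have "negligible {t \<in> {t0 - \<epsilon>..t0 + \<epsilon>}. \<not> second_difference_bounded_at \<phi> t}"
    using \<open>\<epsilon> > 0\<close> by (intro negligible_second_difference_unbounded_Icc convex_on_subset[OF cvx]) auto
  then have "negligible (?S \<inter> ball t0 \<epsilon>)"
    by (rule negligible_subset) (auto simp: dist_real_def)
  with \<open>t0 \<in> ?S\<close> \<open>\<epsilon> > 0\<close> show "\<exists>U. openin (top_of_set ?S) U \<and> t0 \<in> U \<and> negligible U"
    by (intro exI[of _ "?S \<inter> ball t0 \<epsilon>"]) auto
qed

section \<open>Null sets and Lipschitz extensions\<close>

text \<open>Fubini for the sheared set \<open>{(x, t). t \<in> [0, 1], x + t b \<in> S}\<close>: its \<open>x\<close>-sections are null by
  hypothesis and each of its \<open>t\<close>-sections is a translate of \<open>S\<close>.\<close>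
lemma null_sets_lborel_if_negligible_lines:
  fixes S :: "'a::euclidean_space set" and b :: 'a
  assumes S: "S \<in> sets borel" and lines: "\<And>x. negligible {t::real. x + t *\<^sub>R b \<in> S}"
  shows "S \<in> null_sets lborel"
proof -
  define T where "T = {p :: 'a \<times> real. snd p \<in> {0..1} \<and> fst p + snd p *\<^sub>R b \<in> S}"
  have shear: "(\<lambda>p::'a \<times> real. fst p + snd p *\<^sub>R b) \<in> borel_measurable borel"
    and snd: "(snd :: 'a \<times> real \<Rightarrow> real) \<in> borel_measurable borel"
    by (intro borel_measurable_continuous_onI continuous_intros)+
  have "T = (\<lambda>p. fst p + snd p *\<^sub>R b) -` S \<inter> snd -` {0..1}"
    by (auto simp: T_def)
  then have "T \<in> sets borel"
    using measurable_sets[OF shear S] measurable_sets[OF snd, of "{0..1}"] by auto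
  then have T_sets: "T \<in> sets (lborel \<Otimes>\<^sub>M lborel)"
    unfolding lborel_prod by simp
  have "emeasure lborel (Pair x -` T) = 0" for x
  proof -
    have line: "(\<lambda>t::real. x + t *\<^sub>R b) \<in> borel_measurable borel"
      by (intro borel_measurable_continuous_onI continuous_intros)
    have "Pair x -` T = (\<lambda>t. x + t *\<^sub>R b) -` S \<inter> {0..1}"
      by (auto simp: T_def)
    then have "Pair x -` T \<in> sets lborel"
      using measurable_sets[OF line S] by auto
    moreover have "negligible (Pair x -` T)"
      by (rule negligible_subset[OF lines[of x]]) (auto simp: T_def)
    ultimately show ?thesis
      by (metis negligible_iff_null_sets null_sets_completion_iff null_setsD1)
  qed
  then have "emeasure (lborel \<Otimes>\<^sub>M lborel) T = 0"
    by (simp add: lborel.emeasure_pair_measure_alt[OF T_sets])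
  moreover have "emeasure lborel ((\<lambda>x. (x, t)) -` T) = emeasure lborel S * indicator {0..1} t"
    for t :: real
  proof (cases "t \<in> {0..1}")
    case True
    then have "(\<lambda>x. (x, t)) -` T = (+) (t *\<^sub>R b) -` S"
      by (auto simp: T_def add.commute)
    moreover have "emeasure lborel ((+) (t *\<^sub>R b) -` S) = emeasure lborel S"
      using emeasure_distr[of "(+) (t *\<^sub>R b)" lborel borel S] S
      by (simp add: lborel_distr_plus)
    ultimately show ?thesis using True by simp
  qed (auto simp: T_def)
  then have "emeasure (lborel \<Otimes>\<^sub>M lborel) T = emeasure lborel S"
    by (simp add: lborel_pair.emeasure_pair_measure_alt2[OF T_sets] nn_integral_cmult_indicator)
  ultimately show ?thesis
    using S by auto
qed

text \<open>McShane's extension \<open>z \<mapsto> inf\<^sub>s\<^sub>\<in>\<^sub>D (\<psi> s + L dist z s)\<close>.\<close>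
lemma lipschitz_on_extend_real:
  fixes \<psi> :: "'a::metric_space \<Rightarrow> real"
  assumes lip: "L-lipschitz_on D \<psi>"
  obtains \<phi> where "L-lipschitz_on UNIV \<phi>" "\<And>z. z \<in> D \<Longrightarrow> \<phi> z = \<psi> z"
proof (cases "D = {}")
  case True
  with lipschitz_on_nonneg[OF lip] show ?thesis
    by (intro that[of "\<lambda>_. 0"]) (auto intro: lipschitz_onI)
next
  case False
  have "L \<ge> 0" by (rule lipschitz_on_nonneg[OF lip])
  have lip': "\<psi> s \<le> \<psi> s' + L * dist s s'" if "s \<in> D" "s' \<in> D" for s s'
    using lipschitz_onD[OF lip that] by (simp add: dist_real_def dist_commute)
  define \<phi> where "\<phi> z = (INF s\<in>D. \<psi> s + L * dist z s)" for z
  have triangle: "L * dist z s \<le> L * dist z' s + L * dist z z'" for z z' s :: 'a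
    using mult_left_mono[OF dist_triangle3[of z s z'] \<open>L \<ge> 0\<close>] by (simp add: algebra_simps dist_commute)
  obtain s0 where "s0 \<in> D" using False by blast
  have bdd: "bdd_below ((\<lambda>s. \<psi> s + L * dist z s) ` D)" for z
  proof (rule bdd_belowI2)
    fix s assume "s \<in> D"
    show "\<psi> s0 - L * dist z s0 \<le> \<psi> s + L * dist z s"
      using lip'[OF \<open>s0 \<in> D\<close> \<open>s \<in> D\<close>] triangle[of s0 s z] by (simp add: dist_commute)
  qed
  have "\<phi> z = \<psi> z" if "z \<in> D" for z
    unfolding \<phi>_def
  proof (rule antisym)
    show "(INF s\<in>D. \<psi> s + L * dist z s) \<le> \<psi> z"
      using cINF_lower[OF bdd that, of z] by simp
    show "\<psi> z \<le> (INF s\<in>D. \<psi> s + L * dist z s)"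
      using lip'[OF that] by (intro cINF_greatest[OF False]) (simp add: dist_commute)
  qed
  moreover have phi_le: "\<phi> z \<le> \<phi> z' + L * dist z z'" for z z'
  proof -
    have "\<phi> z - L * dist z z' \<le> \<phi> z'"
      unfolding \<phi>_def
    proof (rule cINF_greatest[OF False])
      fix s assume "s \<in> D"
      show "(INF s\<in>D. \<psi> s + L * dist z s) - L * dist z z' \<le> \<psi> s + L * dist z' s"
        using cINF_lower[OF bdd \<open>s \<in> D\<close>, of z] triangle[of z s z'] by linarith
    qed
    then show ?thesis by linarith
  qed
  then have "L-lipschitz_on UNIV \<phi>"
  proof (intro lipschitz_onI \<open>L \<ge> 0\<close>)
    fix z z' :: 'a
    show "dist (\<phi> z) (\<phi> z') \<le> L * dist z z'"
      using phi_le[of z z'] phi_le[of z' z] by (simp add: dist_real_def dist_commute abs_le_iff)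
  qed
  ultimately show ?thesis using that by blast
qed

lemma lipschitz_on_extend_euclidean:
  fixes \<psi> :: "'a::metric_space \<Rightarrow> 'b::euclidean_space"
  assumes lip: "L-lipschitz_on D \<psi>"
  obtains \<phi> where "(real DIM('b) * L)-lipschitz_on UNIV \<phi>" "\<And>z. z \<in> D \<Longrightarrow> \<phi> z = \<psi> z"
proof -
  have "L \<ge> 0" by (rule lipschitz_on_nonneg[OF lip])
  have "\<exists>\<phi>. L-lipschitz_on UNIV \<phi> \<and> (\<forall>z\<in>D. \<phi> z = \<psi> z \<bullet> b)" if "b \<in> Basis" for b
  proof -
    have "L-lipschitz_on D (\<lambda>z. \<psi> z \<bullet> b)"
    proof (rule lipschitz_onI)
      fix z z' assume "z \<in> D" "z' \<in> D"
      have "dist (\<psi> z \<bullet> b) (\<psi> z' \<bullet> b) \<le> dist (\<psi> z) (\<psi> z')"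
        using Basis_le_norm[OF that, of "\<psi> z - \<psi> z'"] by (simp add: dist_norm inner_diff_left)
      also have "\<dots> \<le> L * dist z z'"
        using lipschitz_onD[OF lip \<open>z \<in> D\<close> \<open>z' \<in> D\<close>] .
      finally show "dist (\<psi> z \<bullet> b) (\<psi> z' \<bullet> b) \<le> L * dist z z'" .
    qed (rule \<open>L \<ge> 0\<close>)
    then show ?thesis
      by (rule lipschitz_on_extend_real) blast
  qed
  then obtain c where c: "\<And>b. b \<in> Basis \<Longrightarrow> L-lipschitz_on UNIV (c b)"
    "\<And>b z. b \<in> Basis \<Longrightarrow> z \<in> D \<Longrightarrow> c b z = \<psi> z \<bullet> b"
    by metis
  define \<phi> where "\<phi> z = (\<Sum>b\<in>Basis. c b z *\<^sub>R b)" for z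
  show ?thesis
  proof
    show "(real DIM('b) * L)-lipschitz_on UNIV \<phi>"
    proof (rule lipschitz_onI)
      fix z z'
      have "dist (\<phi> z) (\<phi> z') = norm (\<Sum>b\<in>Basis. (c b z - c b z') *\<^sub>R b)"
        by (simp add: \<phi>_def dist_norm sum_subtractf scaleR_diff_left)
      also have "\<dots> \<le> (\<Sum>b\<in>Basis. \<bar>c b z - c b z'\<bar>)"
        using norm_sum[of "\<lambda>b. (c b z - c b z') *\<^sub>R b" Basis] by simp
      also have "\<dots> \<le> (\<Sum>b\<in>(Basis::'b set). L * dist z z')"
        using lipschitz_onD[OF c(1)] by (intro sum_mono) (simp add: dist_real_def)
      finally show "dist (\<phi> z) (\<phi> z') \<le> real DIM('b) * L * dist z z'" by simp
    qed (use \<open>L \<ge> 0\<close> in simp)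
    show "\<phi> z = \<psi> z" if "z \<in> D" for z
      using that by (simp add: \<phi>_def c(2) euclidean_representation)
  qed
qed

section \<open>Convex functions of several variables\<close>

lemma convex_on_second_difference:
  fixes f :: "'a::real_normed_vector \<Rightarrow> real"
  assumes f: "convex_on U f" and "ball x r \<subseteq> U"
  shows "convex_on (ball 0 r) (second_difference f x)"
proof (rule convex_onI)
  fix u :: real and z1 z2 :: 'a
  assume u: "0 < u" "u < 1" and z: "z1 \<in> ball 0 r" "z2 \<in> ball 0 r"
  then have "x + z1 \<in> U" "x + z2 \<in> U" "x - z1 \<in> U" "x - z2 \<in> U"
    using \<open>ball x r \<subseteq> U\<close> by (auto simp: dist_norm subset_iff)
  then have "f ((1 - u) *\<^sub>R (x + z1) + u *\<^sub>R (x + z2)) \<le> (1 - u) * f (x + z1) + u * f (x + z2)"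
    "f ((1 - u) *\<^sub>R (x - z1) + u *\<^sub>R (x - z2)) \<le> (1 - u) * f (x - z1) + u * f (x - z2)"
    using u by (auto intro!: convex_onD[OF f])
  then show "second_difference f x ((1 - u) *\<^sub>R z1 + u *\<^sub>R z2)
      \<le> (1 - u) * second_difference f x z1 + u * second_difference f x z2"
    by (simp add: second_difference_def algebra_simps)
qed simp

lemma second_difference_scaleR_le:
  assumes f: "convex_on U f" and "x + h \<in> U" "x - h \<in> U" "\<bar>t\<bar> \<le> 1"
  shows "second_difference f x (t *\<^sub>R h) \<le> second_difference f x h"
proof -
  define u where "u = (1 + t) / 2"
  have "0 \<le> u" "u \<le> 1" using \<open>\<bar>t\<bar> \<le> 1\<close> by (auto simp: u_def)
  have "x + t *\<^sub>R h = (1 - u) *\<^sub>R (x - h) + u *\<^sub>R (x + h)" "x - t *\<^sub>R h = (1 - u) *\<^sub>R (x + h) + u *\<^sub>R (x - h)"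
    by (simp_all add: u_def algebra_simps flip: scaleR_add_left) (simp_all add: scaleR_add_left)
  then have "f (x + t *\<^sub>R h) \<le> (1 - u) * f (x - h) + u * f (x + h)"
    "f (x - t *\<^sub>R h) \<le> (1 - u) * f (x + h) + u * f (x - h)"
    using convex_onD[OF f \<open>0 \<le> u\<close> \<open>u \<le> 1\<close>] assms(2,3) by simp_all
  then show ?thesis
    by (simp add: second_difference_def algebra_simps)
qed

text \<open>Write \<open>z\<close> as a convex combination of the points \<open>\<plusminus>s b\<close>, \<open>b \<in> Basis\<close>.\<close>
lemma convex_on_le_from_Basis_bound_l1:
  fixes w :: "'a::euclidean_space \<Rightarrow> real" and z :: 'a
  defines "s \<equiv> \<Sum>b\<in>Basis. \<bar>z \<bullet> b\<bar>"
  assumes w: "convex_on (ball 0 r) w" and "C \<ge> 0"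
    and Basis_bound: "\<And>b t. b \<in> Basis \<Longrightarrow> \<bar>t\<bar> < r \<Longrightarrow> w (t *\<^sub>R b) \<le> C * t\<^sup>2"
    and "s < r"
  shows "w z \<le> C * s\<^sup>2"
proof (cases "s = 0")
  case True
  then have "z = 0"
    by (simp add: s_def sum_nonneg_eq_0_iff euclidean_all_zero_iff)
  obtain b :: 'a where "b \<in> Basis" using nonempty_Basis by blast
  with \<open>s < r\<close> True Basis_bound[of b 0] show ?thesis by (simp add: \<open>z = 0\<close>)
next
  case False
  then have "s > 0" by (simp add: s_def sum_nonneg order_le_neq_trans)
  define y where "y b = (sgn (z \<bullet> b) * s) *\<^sub>R b" for b
  have "w (\<Sum>b\<in>Basis. (\<bar>z \<bullet> b\<bar> / s) *\<^sub>R y b) \<le> (\<Sum>b\<in>Basis. (\<bar>z \<bullet> b\<bar> / s) * w (y b))"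
  proof (rule convex_on_sum[OF _ _ w])
    show "(\<Sum>b\<in>Basis. \<bar>z \<bullet> b\<bar> / s) = 1"
      using \<open>s > 0\<close> by (simp add: s_def flip: sum_divide_distrib)
    show "y b \<in> ball 0 r" if "b \<in> Basis" for b
      using that \<open>s > 0\<close> \<open>s < r\<close> by (simp add: y_def abs_mult abs_sgn_eq)
  qed (use \<open>s > 0\<close> in auto)
  moreover have "(\<Sum>b\<in>Basis. (\<bar>z \<bullet> b\<bar> / s) *\<^sub>R y b) = z"
    using \<open>s > 0\<close> by (simp add: y_def sgn_mult_abs mult.commute[of "\<bar>_\<bar>"] euclidean_representation)
  ultimately have "w z \<le> (\<Sum>b\<in>Basis. (\<bar>z \<bullet> b\<bar> / s) * w (y b))"
    by simp
  also have "\<dots> \<le> (\<Sum>b\<in>Basis. (\<bar>z \<bullet> b\<bar> / s) * (C * s\<^sup>2))"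
  proof (intro sum_mono mult_left_mono)
    fix b :: 'a
    assume "b \<in> Basis"
    have "\<bar>sgn (z \<bullet> b) * s\<bar> \<le> s"
      using \<open>s > 0\<close> by (simp add: abs_mult abs_sgn_eq)
    then have "w (y b) \<le> C * (sgn (z \<bullet> b) * s)\<^sup>2"
      unfolding y_def using \<open>s < r\<close> by (intro Basis_bound \<open>b \<in> Basis\<close>) auto
    also have "\<dots> \<le> C * s\<^sup>2"
      using \<open>C \<ge> 0\<close> by (intro mult_left_mono) (auto simp: power_mult_distrib sgn_if)
    finally show "w (y b) \<le> C * s\<^sup>2" .
  qed (use \<open>s > 0\<close> in simp)
  also have "\<dots> = C * s\<^sup>2"
    using \<open>s > 0\<close> by (simp add: s_def flip: sum_distrib_right sum_divide_distrib)
  finally show ?thesis .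
qed

lemma convex_on_le_from_Basis_bound:
  fixes w :: "'a::euclidean_space \<Rightarrow> real"
  assumes w: "convex_on (ball 0 r) w" and "C \<ge> 0"
    and Basis_bound: "\<And>b t. b \<in> Basis \<Longrightarrow> \<bar>t\<bar> < r \<Longrightarrow> w (t *\<^sub>R b) \<le> C * t\<^sup>2"
    and z: "real DIM('a) * norm z < r"
  shows "w z \<le> C * (real DIM('a))\<^sup>2 * (norm z)\<^sup>2"
proof -
  define s where "s = (\<Sum>b\<in>Basis. \<bar>z \<bullet> b\<bar>)"
  have "s \<le> (\<Sum>b\<in>(Basis::'a set). norm z)"
    unfolding s_def by (intro sum_mono Basis_le_norm)
  then have "s \<le> real DIM('a) * norm z" by simp
  have "w z \<le> C * s\<^sup>2"
    unfolding s_def using \<open>s \<le> real DIM('a) * norm z\<close> z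
    by (intro convex_on_le_from_Basis_bound_l1[OF w \<open>C \<ge> 0\<close> Basis_bound]) (auto simp: s_def)
  also have "\<dots> \<le> C * (real DIM('a) * norm z)\<^sup>2"
    using \<open>C \<ge> 0\<close> \<open>s \<le> real DIM('a) * norm z\<close> by (intro mult_left_mono power_mono) (auto simp: s_def sum_nonneg)
  finally show ?thesis by (simp add: power_mult_distrib mult.assoc)
qed

lemma second_difference_bounded_at_if_along_Basis:
  fixes f :: "'a::euclidean_space \<Rightarrow> real"
  assumes f: "convex_on U f" and "open U" "x \<in> U"
    and along: "\<forall>b\<in>Basis. second_difference_bounded_at (\<lambda>s. f (x + s *\<^sub>R b)) 0"
  shows "second_difference_bounded_at f x"
proof -
  obtain r where "r > 0" and ball: "ball x r \<subseteq> U"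
    using \<open>open U\<close> \<open>x \<in> U\<close> open_contains_ball by blast
  from along obtain C\<^sub>b \<delta>\<^sub>b where \<delta>\<^sub>b: "\<And>b. b \<in> Basis \<Longrightarrow> \<delta>\<^sub>b b > 0"
    and C\<^sub>b: "\<And>b t. b \<in> Basis \<Longrightarrow> \<bar>t\<bar> < \<delta>\<^sub>b b \<Longrightarrow> second_difference f x (t *\<^sub>R b) \<le> C\<^sub>b b * t\<^sup>2"
    unfolding second_difference_bounded_at_def second_difference_along by (simp; metis)
  define R where "R = min r (Min (\<delta>\<^sub>b ` Basis))"
  define C where "C = (\<Sum>b\<in>Basis. \<bar>C\<^sub>b b\<bar>)"
  have "R > 0" using \<open>r > 0\<close> \<delta>\<^sub>b by (simp add: R_def)
  have "C \<ge> 0" by (simp add: C_def sum_nonneg)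
  have Basis_bound: "second_difference f x (t *\<^sub>R b) \<le> C * t\<^sup>2" if "b \<in> Basis" "\<bar>t\<bar> < R" for b t
  proof -
    have "\<bar>t\<bar> < \<delta>\<^sub>b b" using that by (auto simp: R_def)
    then have "second_difference f x (t *\<^sub>R b) \<le> C\<^sub>b b * t\<^sup>2" by (rule C\<^sub>b[OF that(1)])
    also have "\<dots> \<le> C * t\<^sup>2"
      using member_le_sum[of b Basis "\<lambda>b. \<bar>C\<^sub>b b\<bar>"] that(1) by (intro mult_right_mono) (auto simp: C_def)
    finally show ?thesis .
  qed
  have "second_difference f x h \<le> C * (real DIM('a))\<^sup>2 * (norm h)\<^sup>2"
    if "norm h < R / real DIM('a)" for h
  proof (rule convex_on_le_from_Basis_bound[where r = R])
    show "convex_on (ball 0 R) (second_difference f x)"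
      by (rule convex_on_subset[OF convex_on_second_difference[OF f ball]]) (auto simp: R_def)
    show "real DIM('a) * norm h < R"
      using that by (simp add: field_simps)
  qed (use Basis_bound \<open>C \<ge> 0\<close> in auto)
  with \<open>R > 0\<close> show ?thesis
    unfolding second_difference_bounded_at_def
    by (intro exI[of _ "C * (real DIM('a))\<^sup>2"] exI[of _ "R / real DIM('a)"]) auto
qed

lemma midpoint_eq_convex_combination: "midpoint a b = (1 - 1/2) *\<^sub>R a + (1/2::real) *\<^sub>R b"
  by (simp add: midpoint_def algebra_simps)

lemma convex_on_midpoint_gap_le:
  assumes f: "convex_on U f" and "x \<in> U" "x + h \<in> U" "x - h \<in> U"
  shows "(f (x + h) + f x) / 2 - f (midpoint (x + h) x) \<le> second_difference f x h / 2"
proof -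
  have mid: "midpoint (x + h) x \<in> U"
    unfolding midpoint_eq_convex_combination
    by (rule convexD_alt[OF convex_on_imp_convex[OF f] \<open>x + h \<in> U\<close> \<open>x \<in> U\<close>]) auto
  have "x = (1 - 1/3) *\<^sub>R midpoint (x + h) x + (1/3) *\<^sub>R (x - h)"
    by (simp add: midpoint_def algebra_simps flip: scaleR_add_left)
  then have "f x \<le> (1 - 1/3) * f (midpoint (x + h) x) + (1/3) * f (x - h)"
    using convex_onD[OF f, of "1/3" "midpoint (x + h) x" "x - h"] mid assms by simp
  then show ?thesis by (simp add: second_difference_def field_simps)
qed

text \<open>Along a line the second difference grows with the step (\<open>second_difference_scaleR_le\<close>),
  so a large value at a step \<open>s\<close> persists at any rational step in \<open>(s, 2s)\<close>.\<close>
lemma second_difference_large_at_rational_step: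
  fixes f :: "'a::real_normed_vector \<Rightarrow> real"
  assumes f: "convex_on U f" and "open U" "x \<in> U" "C \<ge> 0" "\<epsilon> > 0"
    and unbounded: "\<not> second_difference_bounded_at (\<lambda>s. f (x + s *\<^sub>R b)) 0"
  obtains q where "q \<in> \<rat>" "0 < q" "q < \<epsilon>" "x + q *\<^sub>R b \<in> U" "x - q *\<^sub>R b \<in> U"
    "C * q\<^sup>2 < second_difference f x (q *\<^sub>R b)"
proof -
  have "open ((\<lambda>t::real. x + t *\<^sub>R b) -` U)"
    by (intro continuous_open_vimage \<open>open U\<close> continuous_intros)
  moreover have "0 \<in> (\<lambda>t::real. x + t *\<^sub>R b) -` U"
    using \<open>x \<in> U\<close> by simp
  ultimately obtain \<rho> where "\<rho> > 0" and "ball 0 \<rho> \<subseteq> (\<lambda>t::real. x + t *\<^sub>R b) -` U"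
    by (rule openE)
  then have line: "x + t *\<^sub>R b \<in> U" if "\<bar>t\<bar> < \<rho>" for t
    using that by (auto simp: subset_iff)
  define \<delta> where "\<delta> = min \<rho> \<epsilon> / 2"
  have "\<delta> > 0" "2 * \<delta> \<le> \<rho>" "2 * \<delta> \<le> \<epsilon>"
    using \<open>\<rho> > 0\<close> \<open>\<epsilon> > 0\<close> by (auto simp: \<delta>_def)
  obtain s where s: "0 < s" "s < \<delta>" "4 * C * s\<^sup>2 < second_difference f x (s *\<^sub>R b)"
    using \<open>\<delta> > 0\<close> not_second_difference_bounded_atD[OF unbounded, where C = "4 * C"]
    by (auto simp: second_difference_along)
  obtain q where "q \<in> \<rat>" "s < q" "q < 2 * s"
    using Rats_dense_in_real[of s "2 * s"] \<open>s > 0\<close> by auto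
  have "x + q *\<^sub>R b \<in> U" "x - q *\<^sub>R b \<in> U"
    using line[of q] line[of "- q"] \<open>s < q\<close> \<open>q < 2 * s\<close> \<open>s < \<delta>\<close> \<open>2 * \<delta> \<le> \<rho>\<close> \<open>s > 0\<close> by auto
  moreover have "C * q\<^sup>2 < second_difference f x (q *\<^sub>R b)"
  proof -
    have "C * q\<^sup>2 \<le> C * (2 * s)\<^sup>2"
      using \<open>s < q\<close> \<open>q < 2 * s\<close> \<open>s > 0\<close> \<open>C \<ge> 0\<close> by (intro mult_left_mono power_mono) auto
    also have "\<dots> < second_difference f x (s *\<^sub>R b)"
      using s(3) by (simp add: power_mult_distrib)
    also have "\<dots> = second_difference f x ((s / q) *\<^sub>R (q *\<^sub>R b))"
      using \<open>s < q\<close> \<open>s > 0\<close> by simp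
    also have "\<dots> \<le> second_difference f x (q *\<^sub>R b)"
      using \<open>x + q *\<^sub>R b \<in> U\<close> \<open>x - q *\<^sub>R b \<in> U\<close> \<open>s < q\<close> \<open>s > 0\<close>
      by (intro second_difference_scaleR_le[OF f]) auto
    finally show ?thesis .
  qed
  moreover have "q < \<epsilon>"
    using \<open>q < 2 * s\<close> \<open>s < \<delta>\<close> \<open>2 * \<delta> \<le> \<epsilon>\<close> by linarith
  ultimately show ?thesis
    using that \<open>q \<in> \<rat>\<close> \<open>s < q\<close> \<open>s > 0\<close> by simp
qed

lemma not_second_difference_bounded_along_iff:
  fixes f :: "'a::real_normed_vector \<Rightarrow> real"
  assumes f: "convex_on U f" and "open U" "x \<in> U"
  shows "\<not> second_difference_bounded_at (\<lambda>s. f (x + s *\<^sub>R b)) 0 \<longleftrightarrow>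
    (\<forall>n k::nat. \<exists>q\<in>\<rat>. 0 < q \<and> q < 1 / Suc k \<and> x + q *\<^sub>R b \<in> U \<and> x - q *\<^sub>R b \<in> U \<and>
       real n * q\<^sup>2 < second_difference f x (q *\<^sub>R b))" (is "_ \<longleftrightarrow> (\<forall>n k. ?P n k)")
proof
  assume unbounded: "\<not> second_difference_bounded_at (\<lambda>s. f (x + s *\<^sub>R b)) 0"
  show "\<forall>n k. ?P n k"
  proof (intro allI)
    fix n k :: nat
    obtain q where "q \<in> \<rat>" "0 < q" "q < 1 / Suc k" "x + q *\<^sub>R b \<in> U" "x - q *\<^sub>R b \<in> U"
      "real n * q\<^sup>2 < second_difference f x (q *\<^sub>R b)"
      by (rule second_difference_large_at_rational_step[OF assms _ _ unbounded, where C = "real n"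
          and \<epsilon> = "1 / Suc k"]) auto
    then show "?P n k" by blast
  qed
next
  assume P: "\<forall>n k. ?P n k"
  show "\<not> second_difference_bounded_at (\<lambda>s. f (x + s *\<^sub>R b)) 0"
  proof
    assume "second_difference_bounded_at (\<lambda>s. f (x + s *\<^sub>R b)) 0"
    then obtain C \<delta> where "\<delta> > 0" and C: "\<And>t. \<bar>t\<bar> < \<delta> \<Longrightarrow> second_difference f x (t *\<^sub>R b) \<le> C * t\<^sup>2"
      by (auto simp: second_difference_bounded_at_def second_difference_along)
    obtain n :: nat where "C \<le> real n" using real_arch_simple by blast
    obtain k :: nat where "inverse (real (Suc k)) < \<delta>" using reals_Archimedean[OF \<open>\<delta> > 0\<close>] by blast
    from P obtain q where "0 < q" "q < 1 / Suc k" and q: "real n * q\<^sup>2 < second_difference f x (q *\<^sub>R b)"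
      by blast
    have "second_difference f x (q *\<^sub>R b) \<le> C * q\<^sup>2"
      using \<open>0 < q\<close> \<open>q < 1 / Suc k\<close> \<open>inverse (real (Suc k)) < \<delta>\<close>
      by (intro C) (simp add: inverse_eq_divide)
    also have "\<dots> \<le> real n * q\<^sup>2"
      using \<open>C \<le> real n\<close> by (intro mult_right_mono) auto
    finally show False using q by linarith
  qed
qed

lemma sets_borel_second_difference_unbounded_along:
  fixes f :: "'a::euclidean_space \<Rightarrow> real"
  assumes f: "convex_on U f" and "open U"
  shows "{x \<in> U. \<not> second_difference_bounded_at (\<lambda>s. f (x + s *\<^sub>R b)) 0} \<in> sets borel"
proof -
  have cont: "continuous_on U f"
    by (rule convex_on_continuous[OF \<open>open U\<close> f])
  define A where "A n k q = {x \<in> U. 0 < q \<and> q < 1 / Suc k \<and> x + q *\<^sub>R b \<in> U \<and> x - q *\<^sub>R b \<in> U \<and>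
    real n * q\<^sup>2 < second_difference f x (q *\<^sub>R b)}" for n k :: nat and q :: real
  have open_A: "open (A n k q)" for n k q
  proof (cases "0 < q \<and> q < 1 / Suc k")
    case True
    define W where "W = U \<inter> (\<lambda>x. x + q *\<^sub>R b) -` U \<inter> (\<lambda>x. x - q *\<^sub>R b) -` U"
    have "open W"
      unfolding W_def by (intro open_Int \<open>open U\<close> continuous_open_vimage continuous_intros)
    moreover have "continuous_on W (\<lambda>x. f (x + q *\<^sub>R b))" "continuous_on W (\<lambda>x. f (x - q *\<^sub>R b))"
      by (rule continuous_on_compose2[OF cont], intro continuous_intros, auto simp: W_def)+
    moreover have "continuous_on W f"
      by (rule continuous_on_subset[OF cont]) (auto simp: W_def)
    ultimately have "open (W \<inter> (\<lambda>x. second_difference f x (q *\<^sub>R b)) -` {real n * q\<^sup>2<..})"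
      unfolding second_difference_def by (intro continuous_open_preimage continuous_intros) auto
    moreover have "A n k q = W \<inter> (\<lambda>x. second_difference f x (q *\<^sub>R b)) -` {real n * q\<^sup>2<..}"
      using True by (auto simp: A_def W_def)
    ultimately show ?thesis by simp
  qed (auto simp: A_def)
  have "\<not> second_difference_bounded_at (\<lambda>s. f (x + s *\<^sub>R b)) 0 \<longleftrightarrow>
      x \<in> (\<Inter>n. \<Inter>k. \<Union>q \<in> \<rat>. A n k q)" if "x \<in> U" for x
    using not_second_difference_bounded_along_iff[OF f \<open>open U\<close> that] that by (simp add: A_def)
  then have "{x \<in> U. \<not> second_difference_bounded_at (\<lambda>s. f (x + s *\<^sub>R b)) 0}
      = U \<inter> (\<Inter>n. \<Inter>k. \<Union>q \<in> \<rat>. A n k q)"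
    by blast
  moreover have "U \<inter> (\<Inter>n. \<Inter>k. \<Union>q \<in> \<rat>. A n k q) \<in> sets borel"
  proof -
    have "(\<Union>q \<in> \<rat>. A n k q) \<in> sets borel" for n k
      using open_A countable_rat by (intro sets.countable_UN') auto
    then show ?thesis
      using \<open>open U\<close> by (intro sets.Int sets.countable_INT) auto
  qed
  ultimately show ?thesis by simp
qed

lemma convex_on_along_line:
  assumes f: "convex_on U f"
  shows "convex_on {t::real. x + t *\<^sub>R b \<in> U} (\<lambda>t. f (x + t *\<^sub>R b))"
proof -
  have line: "x + ((1 - u) * t1 + u * t2) *\<^sub>R b = (1 - u) *\<^sub>R (x + t1 *\<^sub>R b) + u *\<^sub>R (x + t2 *\<^sub>R b)"
    for u t1 t2 :: real
    by (simp add: algebra_simps)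
  show ?thesis
  proof (rule convex_onI)
    show "convex {t::real. x + t *\<^sub>R b \<in> U}"
      using convex_on_imp_convex[OF f] unfolding convex_alt by (simp add: line)
  qed (simp add: line convex_onD[OF f])
qed

lemma negligible_second_difference_unbounded_along:
  fixes f :: "'a::euclidean_space \<Rightarrow> real"
  assumes f: "convex_on U f" and "open U"
  shows "negligible {x \<in> U. \<not> second_difference_bounded_at (\<lambda>s. f (x + s *\<^sub>R b)) 0}"
proof -
  have "{x \<in> U. \<not> second_difference_bounded_at (\<lambda>s. f (x + s *\<^sub>R b)) 0} \<in> null_sets lborel"
  proof (rule null_sets_lborel_if_negligible_lines)
    fix x
    define I where "I = (\<lambda>t::real. x + t *\<^sub>R b) -` U"
    have "open I"
      unfolding I_def by (intro continuous_open_vimage \<open>open U\<close> continuous_intros)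
    moreover have "convex_on I (\<lambda>t. f (x + t *\<^sub>R b))"
      unfolding I_def vimage_def by (rule convex_on_along_line[OF f])
    ultimately have "negligible {t \<in> I. \<not> second_difference_bounded_at (\<lambda>t. f (x + t *\<^sub>R b)) t}"
      by (rule negligible_second_difference_unbounded)
    then show "negligible {t. x + t *\<^sub>R b \<in> {x \<in> U. \<not> second_difference_bounded_at (\<lambda>s. f (x + s *\<^sub>R b)) 0}}"
      by (simp add: I_def second_difference_bounded_at_along_iff[of f x b])
  qed (rule sets_borel_second_difference_unbounded_along[OF f \<open>open U\<close>])
  then show ?thesis
    by (simp add: negligible_iff_null_sets null_sets_completionI)
qed

theorem convex_on_second_difference_bounded_AE:
  fixes f :: "'a::euclidean_space \<Rightarrow> real"
  assumes f: "convex_on U f" and "open U"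
  shows "AE x in lebesgue. x \<in> U \<longrightarrow> second_difference_bounded_at f x"
proof (rule AE_I')
  let ?bad = "\<lambda>b. {x \<in> U. \<not> second_difference_bounded_at (\<lambda>s. f (x + s *\<^sub>R b)) 0}"
  have "negligible (\<Union>b\<in>Basis. ?bad b)"
    using negligible_second_difference_unbounded_along[OF f \<open>open U\<close>]
    by (intro negligible_countable_Union countable_image countable_finite finite_Basis) auto
  then show "(\<Union>b\<in>Basis. ?bad b) \<in> null_sets lebesgue"
    by (simp add: negligible_iff_null_sets)
  show "{x \<in> space lebesgue. \<not> (x \<in> U \<longrightarrow> second_difference_bounded_at f x)} \<subseteq> (\<Union>b\<in>Basis. ?bad b)"
    using second_difference_bounded_at_if_along_Basis[OF f \<open>open U\<close>] by blast
qed

section \<open>Subgradients of semiconvex functions\<close>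

lemma semi_subdiff_imp_local_subgradient:
  fixes g :: "'a::real_inner \<Rightarrow> real"
  assumes "u \<in> semi_subdiff \<kappa> g x"
  obtains e where "e > 0" "\<And>x'. dist x' x < e \<Longrightarrow>
    g x + \<kappa> / 2 * (norm x)\<^sup>2 + inner (u + \<kappa> *\<^sub>R x) (x' - x) \<le> g x' + \<kappa> / 2 * (norm x')\<^sup>2"
proof -
  from assms obtain e where "e > 0"
    and local: "\<And>x'. dist x' x < e \<Longrightarrow> inner u (x' - x) - \<kappa> / 2 * (norm (x' - x))\<^sup>2 \<le> g x' - g x"
    unfolding semi_subdiff_def by blast
  have square: "(norm x')\<^sup>2 = (norm x)\<^sup>2 + 2 * inner x (x' - x) + (norm (x' - x))\<^sup>2" for x'
    by (simp add: power2_norm_eq_inner inner_diff_left inner_diff_right inner_commute)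
  have "\<kappa> / 2 * (norm x')\<^sup>2 = \<kappa> / 2 * (norm x)\<^sup>2 + \<kappa> * inner x (x' - x) + \<kappa> / 2 * (norm (x' - x))\<^sup>2"
    for x'
    unfolding square[of x'] by (simp add: algebra_simps)
  moreover have "inner (u + \<kappa> *\<^sub>R x) (x' - x) = inner u (x' - x) + \<kappa> * inner x (x' - x)" for x'
    by (simp add: inner_add_left)
  ultimately show ?thesis
    using local by (intro that[OF \<open>e > 0\<close>]) (smt (verit))
qed

text \<open>Apply the local inequality at a point of the segment from \<open>x\<close> to \<open>z\<close> close to \<open>x\<close>.\<close>
lemma convex_on_local_subgradient_imp_global:
  assumes g: "convex_on U g" and "x \<in> U" "z \<in> U" "e > 0"
    and local: "\<And>x'. x' \<in> U \<Longrightarrow> dist x' x < e \<Longrightarrow> g x + inner p (x' - x) \<le> g x'"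
  shows "g x + inner p (z - x) \<le> g z"
proof (cases "z = x")
  case False
  define t where "t = min 1 (e / (2 * norm (z - x)))"
  have "0 < t" "t \<le> 1" using \<open>e > 0\<close> False by (auto simp: t_def)
  have "t * norm (z - x) \<le> e / 2"
    using False by (simp add: t_def min_def field_simps)
  define x' where "x' = (1 - t) *\<^sub>R x + t *\<^sub>R z"
  have "x' - x = t *\<^sub>R (z - x)" by (simp add: x'_def algebra_simps)
  have "x' \<in> U"
    unfolding x'_def using convexD_alt[OF convex_on_imp_convex[OF g] \<open>x \<in> U\<close> \<open>z \<in> U\<close>] \<open>0 < t\<close> \<open>t \<le> 1\<close>
    by simp
  moreover have "dist x' x < e"
    using \<open>x' - x = t *\<^sub>R (z - x)\<close> \<open>t * norm (z - x) \<le> e / 2\<close> \<open>0 < t\<close> \<open>e > 0\<close> by (simp add: dist_norm)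
  ultimately have "g x + inner p (x' - x) \<le> g x'"
    by (rule local)
  then have "g x + t * inner p (z - x) \<le> g x'"
    using \<open>x' - x = t *\<^sub>R (z - x)\<close> by simp
  also have "\<dots> \<le> (1 - t) * g x + t * g z"
    unfolding x'_def using convex_onD[OF g] \<open>0 < t\<close> \<open>t \<le> 1\<close> \<open>x \<in> U\<close> \<open>z \<in> U\<close> by simp
  finally have "t * (g x + inner p (z - x)) \<le> t * g z" by (simp add: algebra_simps)
  with \<open>0 < t\<close> show ?thesis by simp
qed simp

section \<open>Minimisation over the fibres\<close>

lemma le_sqrt_mult_if_power2_le:
  fixes a b c :: real
  assumes "a\<^sup>2 \<le> c * b\<^sup>2" "0 \<le> b"
  shows "a \<le> sqrt c * b"
proof -
  have "a \<le> sqrt (c * b\<^sup>2)" by (rule real_le_rsqrt[OF assms(1)])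
  also have "\<dots> = sqrt c * b" using \<open>0 \<le> b\<close> by (simp add: real_sqrt_mult)
  finally show ?thesis .
qed

locale partial_minimization =
  fixes \<Omega> :: "('n::euclidean_space \<times> 'm::euclidean_space) set"
    and f :: "'n \<times> 'm \<Rightarrow> real"
    and \<kappa> \<sigma> :: real
  assumes open_\<Omega>: "open \<Omega>" and convex_\<Omega>: "convex \<Omega>"
    and kappa_nonneg: "\<kappa> \<ge> 0" and sigma_pos: "\<sigma> > 0"
    and convex_shifted: "convex_on \<Omega> (\<lambda>(x, y). f (x, y) + \<kappa> / 2 * (norm x)\<^sup>2 - \<sigma> * (norm y)\<^sup>2)"
    and argmin_nonempty: "\<forall>x \<in> fst ` \<Omega>. argmin_set f \<Omega> x \<noteq> {}"
begin

definition marginal :: "'n \<Rightarrow> real" where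
  "marginal x = (INF y \<in> fibre \<Omega> x. f (x, y))"

definition minimizer :: "'n \<Rightarrow> 'm" where
  "minimizer x = (SOME y. y \<in> argmin_set f \<Omega> x)"

abbreviation F :: "'n \<Rightarrow> 'm \<Rightarrow> real" where
  "F x y \<equiv> f (x, y) + \<kappa> / 2 * (norm x)\<^sup>2"

definition G :: "'n \<Rightarrow> real" where
  "G x = marginal x + \<kappa> / 2 * (norm x)\<^sup>2"

lemma open_fst_\<Omega>: "open (fst ` \<Omega>)"
  using open_\<Omega> by (rule open_image_fst)

lemma convex_fst_\<Omega>: "convex (fst ` \<Omega>)"
  using convex_\<Omega> by (rule convex_linear_image[OF linear_fst])

lemma minimizer_in_argmin: "x \<in> fst ` \<Omega> \<Longrightarrow> minimizer x \<in> argmin_set f \<Omega> x"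
  unfolding minimizer_def using argmin_nonempty by (metis ex_in_conv someI_ex)

lemma minimizer_mem: "x \<in> fst ` \<Omega> \<Longrightarrow> (x, minimizer x) \<in> \<Omega>"
  using minimizer_in_argmin by (auto simp: argmin_set_def fibre_def)

lemma minimizer_le: "(x, y) \<in> \<Omega> \<Longrightarrow> f (x, minimizer x) \<le> f (x, y)"
  using minimizer_in_argmin[of x] by (force simp: argmin_set_def fibre_def)

lemma marginal_eq:
  assumes "x \<in> fst ` \<Omega>"
  shows "marginal x = f (x, minimizer x)"
  unfolding marginal_def
proof (rule antisym)
  have mem: "minimizer x \<in> fibre \<Omega> x"
    using minimizer_mem[OF assms] by (simp add: fibre_def)
  have "bdd_below ((\<lambda>y. f (x, y)) ` fibre \<Omega> x)"
    using minimizer_le by (auto simp: fibre_def bdd_below_def)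
  from cINF_lower[OF this mem] show "(INF y \<in> fibre \<Omega> x. f (x, y)) \<le> f (x, minimizer x)" .
  show "f (x, minimizer x) \<le> (INF y \<in> fibre \<Omega> x. f (x, y))"
    using mem minimizer_le by (intro cINF_greatest) (auto simp: fibre_def)
qed

lemma marginal_le: "(x, y) \<in> \<Omega> \<Longrightarrow> marginal x \<le> f (x, y)"
  using marginal_eq[of x] minimizer_le[of x y] by force

text \<open>The strong convexity of \<open>F\<close> in \<open>y\<close> survives minimisation as a defect term.\<close>
lemma G_convex_combination_le:
  assumes "(x1, y1) \<in> \<Omega>" "(x2, y2) \<in> \<Omega>" "0 \<le> t" "t \<le> 1"
  shows "G ((1 - t) *\<^sub>R x1 + t *\<^sub>R x2)
    \<le> (1 - t) * F x1 y1 + t * F x2 y2 - \<sigma> * t * (1 - t) * (norm (y1 - y2))\<^sup>2"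
proof -
  let ?x = "(1 - t) *\<^sub>R x1 + t *\<^sub>R x2" and ?y = "(1 - t) *\<^sub>R y1 + t *\<^sub>R y2"
  have "(?x, ?y) \<in> \<Omega>"
    using convexD_alt[OF convex_\<Omega> assms] by simp
  then have "G ?x \<le> F ?x ?y"
    using marginal_le by (simp add: G_def)
  also have "\<dots> \<le> (1 - t) * (F x1 y1 - \<sigma> * (norm y1)\<^sup>2) + t * (F x2 y2 - \<sigma> * (norm y2)\<^sup>2)
      + \<sigma> * (norm ?y)\<^sup>2"
    using convex_onD[OF convex_shifted \<open>0 \<le> t\<close> \<open>t \<le> 1\<close> assms(1,2)] by simp
  also have "(norm ?y)\<^sup>2 = (1 - t) * (norm y1)\<^sup>2 + t * (norm y2)\<^sup>2 - t * (1 - t) * (norm (y1 - y2))\<^sup>2"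
    by (simp add: power2_norm_eq_inner inner_commute algebra_simps)
  finally show ?thesis by (simp add: algebra_simps)
qed

lemma G_eq: "x \<in> fst ` \<Omega> \<Longrightarrow> G x = F x (minimizer x)"
  by (simp add: G_def marginal_eq)

lemma convex_on_G: "convex_on (fst ` \<Omega>) G"
proof (rule convex_onI[OF _ convex_fst_\<Omega>])
  fix t :: real and x1 x2
  assume "0 < t" "t < 1" "x1 \<in> fst ` \<Omega>" "x2 \<in> fst ` \<Omega>"
  moreover have "0 \<le> \<sigma> * t * (1 - t) * (norm (minimizer x1 - minimizer x2))\<^sup>2"
    using sigma_pos \<open>0 < t\<close> \<open>t < 1\<close> by simp
  ultimately show "G ((1 - t) *\<^sub>R x1 + t *\<^sub>R x2) \<le> (1 - t) * G x1 + t * G x2"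
    using G_convex_combination_le[OF minimizer_mem minimizer_mem, of x1 x2 t]
    by (simp add: G_eq)
qed

lemma semiconvex_marginal: "semiconvex_on \<kappa> (fst ` \<Omega>) marginal"
  using convex_on_G by (simp add: semiconvex_on_def G_def[abs_def])

lemma argmin_eq_minimizer:
  assumes "x \<in> fst ` \<Omega>"
  shows "argmin_set f \<Omega> x = {minimizer x}"
proof -
  have "y = minimizer x" if y: "y \<in> argmin_set f \<Omega> x" for y
  proof -
    have "(x, y) \<in> \<Omega>" "f (x, y) = f (x, minimizer x)"
      using y minimizer_le[of x y] minimizer_mem[OF assms] by (auto simp: argmin_set_def fibre_def)
    then have "G x \<le> G x - \<sigma> / 4 * (norm (y - minimizer x))\<^sup>2"
      using G_convex_combination_le[OF \<open>(x, y) \<in> \<Omega>\<close> minimizer_mem[OF assms], of "1/2"] assms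
      by (simp add: G_eq algebra_simps flip: scaleR_add_left)
    then show ?thesis using sigma_pos by (simp add: mult_le_0_iff)
  qed
  with minimizer_in_argmin[OF assms] show ?thesis by blast
qed

lemma G_midpoint_gap:
  assumes "x1 \<in> fst ` \<Omega>" "x2 \<in> fst ` \<Omega>"
  shows "\<sigma> / 4 * (norm (minimizer x1 - minimizer x2))\<^sup>2 \<le> (G x1 + G x2) / 2 - G (midpoint x1 x2)"
proof -
  have "G (midpoint x1 x2) \<le> (1 - 1/2) * F x1 (minimizer x1) + (1/2) * F x2 (minimizer x2)
      - \<sigma> * (1/2) * (1 - 1/2) * (norm (minimizer x1 - minimizer x2))\<^sup>2"
    unfolding midpoint_eq_convex_combination
    by (rule G_convex_combination_le[OF minimizer_mem minimizer_mem]) (use assms in auto)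
  with assms show ?thesis by (simp add: G_eq field_simps)
qed

lemma subgradient_G:
  assumes "x \<in> fst ` \<Omega>" "u \<in> semi_subdiff \<kappa> marginal x" "z \<in> fst ` \<Omega>"
  shows "G x + inner (u + \<kappa> *\<^sub>R x) (z - x) \<le> G z"
proof -
  obtain e where "e > 0" and "\<And>x'. dist x' x < e \<Longrightarrow> G x + inner (u + \<kappa> *\<^sub>R x) (x' - x) \<le> G x'"
    using semi_subdiff_imp_local_subgradient[OF assms(2)] unfolding G_def by blast
  then show ?thesis
    using convex_on_local_subgradient_imp_global[OF convex_on_G assms(1,3)] by blast
qed

text \<open>Adding the subgradient inequalities at \<open>x\<^sub>1\<close> and \<open>x\<^sub>2\<close>, evaluated at their midpoint, bounds the
  midpoint gap of \<open>G\<close> from above.\<close>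
lemma minimizer_monotone:
  assumes "x1 \<in> fst ` \<Omega>" "u1 \<in> semi_subdiff \<kappa> marginal x1"
    and "x2 \<in> fst ` \<Omega>" "u2 \<in> semi_subdiff \<kappa> marginal x2"
  shows "\<sigma> * (norm (minimizer x1 - minimizer x2))\<^sup>2
    \<le> inner ((u1 + \<kappa> *\<^sub>R x1) - (u2 + \<kappa> *\<^sub>R x2)) (x1 - x2)"
proof -
  define p1 where "p1 = u1 + \<kappa> *\<^sub>R x1"
  define p2 where "p2 = u2 + \<kappa> *\<^sub>R x2"
  have "midpoint x1 x2 \<in> fst ` \<Omega>"
    unfolding midpoint_eq_convex_combination using assms(1,3) by (intro convexD_alt[OF convex_fst_\<Omega>]) auto
  then have "G x1 + inner p1 (midpoint x1 x2 - x1) \<le> G (midpoint x1 x2)"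
    and "G x2 + inner p2 (midpoint x1 x2 - x2) \<le> G (midpoint x1 x2)"
    unfolding p1_def p2_def using assms by (blast intro: subgradient_G)+
  moreover have "inner p1 (midpoint x1 x2 - x1) = - inner p1 (x1 - x2) / 2"
    "inner p2 (midpoint x1 x2 - x2) = inner p2 (x1 - x2) / 2"
    by (simp_all add: midpoint_def inner_diff_right inner_add_right field_simps)
  ultimately have "(G x1 + G x2) / 2 - G (midpoint x1 x2) \<le> inner (p1 - p2) (x1 - x2) / 4"
    unfolding inner_diff_left diff_divide_distrib add_divide_distrib by linarith
  with G_midpoint_gap[OF assms(1,3)] show ?thesis
    by (simp add: p1_def p2_def)
qed

lemma minimizer_lipschitz_on_semi_subdiff:
  assumes "x1 \<in> fst ` \<Omega>" "u1 \<in> semi_subdiff \<kappa> marginal x1"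
    and "x2 \<in> fst ` \<Omega>" "u2 \<in> semi_subdiff \<kappa> marginal x2"
  shows "dist (minimizer x1) (minimizer x2) \<le> sqrt ((1 + \<kappa>) / \<sigma>) * dist (x1, u1) (x2, u2)"
proof -
  define d where "d = dist (x1, u1) (x2, u2)"
  have "norm (x1 - x2) \<le> d" "norm (u1 - u2) \<le> d"
    using dist_fst_le[of "(x1, u1)" "(x2, u2)"] dist_snd_le[of "(x1, u1)" "(x2, u2)"]
    by (simp_all add: d_def dist_norm)
  have "norm ((u1 + \<kappa> *\<^sub>R x1) - (u2 + \<kappa> *\<^sub>R x2)) = norm ((u1 - u2) + \<kappa> *\<^sub>R (x1 - x2))"
    by (simp add: algebra_simps)
  also have "\<dots> \<le> norm (u1 - u2) + \<kappa> * norm (x1 - x2)"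
    using norm_triangle_ineq[of "u1 - u2" "\<kappa> *\<^sub>R (x1 - x2)"] kappa_nonneg by simp
  also have "\<dots> \<le> (1 + \<kappa>) * d"
    using \<open>norm (u1 - u2) \<le> d\<close> mult_left_mono[OF \<open>norm (x1 - x2) \<le> d\<close> kappa_nonneg]
    by (simp add: algebra_simps)
  finally have dp: "norm ((u1 + \<kappa> *\<^sub>R x1) - (u2 + \<kappa> *\<^sub>R x2)) \<le> (1 + \<kappa>) * d" .
  have "\<sigma> * (norm (minimizer x1 - minimizer x2))\<^sup>2 \<le> inner ((u1 + \<kappa> *\<^sub>R x1) - (u2 + \<kappa> *\<^sub>R x2)) (x1 - x2)"
    by (rule minimizer_monotone[OF assms])
  also have "\<dots> \<le> norm ((u1 + \<kappa> *\<^sub>R x1) - (u2 + \<kappa> *\<^sub>R x2)) * norm (x1 - x2)"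
    by (rule norm_cauchy_schwarz)
  also have "\<dots> \<le> ((1 + \<kappa>) * d) * d"
    using dp \<open>norm (x1 - x2) \<le> d\<close> kappa_nonneg by (intro mult_mono) (auto simp: d_def)
  finally have "\<sigma> * (norm (minimizer x1 - minimizer x2))\<^sup>2 \<le> (1 + \<kappa>) * d * d" .
  then have "(norm (minimizer x1 - minimizer x2))\<^sup>2 \<le> (1 + \<kappa>) / \<sigma> * d\<^sup>2"
    using sigma_pos by (simp add: field_simps power2_eq_square)
  then show ?thesis
    unfolding dist_norm[of "minimizer x1"] d_def[symmetric] by (rule le_sqrt_mult_if_power2_le) (simp add: d_def)
qed

lemma minimizer_eq_lipschitz_function:
  "\<exists>\<phi> :: 'n \<times> 'n \<Rightarrow> 'm. \<exists>L. L-lipschitz_on UNIV \<phi> \<and>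
     (\<forall>x u. x \<in> fst ` \<Omega> \<and> u \<in> semi_subdiff \<kappa> marginal x \<longrightarrow> minimizer x = \<phi> (x, u))"
proof -
  define D where "D = {p. fst p \<in> fst ` \<Omega> \<and> snd p \<in> semi_subdiff \<kappa> marginal (fst p)}"
  have "(sqrt ((1 + \<kappa>) / \<sigma>))-lipschitz_on D (\<lambda>p. minimizer (fst p))"
  proof (rule lipschitz_onI)
    fix p q
    assume "p \<in> D" "q \<in> D"
    then show "dist (minimizer (fst p)) (minimizer (fst q)) \<le> sqrt ((1 + \<kappa>) / \<sigma>) * dist p q"
      using minimizer_lipschitz_on_semi_subdiff[of "fst p" "snd p" "fst q" "snd q"] by (simp add: D_def)
  qed (use kappa_nonneg sigma_pos in simp)
  then obtain \<phi> where "(real DIM('m) * sqrt ((1 + \<kappa>) / \<sigma>))-lipschitz_on UNIV \<phi>"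
    "\<And>p. p \<in> D \<Longrightarrow> \<phi> p = minimizer (fst p)"
    by (rule lipschitz_on_extend_euclidean) blast
  then show ?thesis
    unfolding D_def by (intro exI[of _ \<phi>]) force
qed

lemma minimizer_calm_if_second_difference_bounded:
  assumes "x0 \<in> fst ` \<Omega>" "second_difference_bounded_at G x0"
  obtains C \<delta> where "\<delta> > 0"
    "\<And>x. x \<in> fst ` \<Omega> \<Longrightarrow> norm (x - x0) < \<delta> \<Longrightarrow> norm (minimizer x - minimizer x0) \<le> C * norm (x - x0)"
proof -
  obtain C \<delta> where "\<delta> > 0" and C: "\<And>h. norm h < \<delta> \<Longrightarrow> second_difference G x0 h \<le> C * (norm h)\<^sup>2"
    using assms(2) unfolding second_difference_bounded_at_def by blast
  obtain r where "r > 0" and ball: "ball x0 r \<subseteq> fst ` \<Omega>"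
    using open_fst_\<Omega> assms(1) open_contains_ball by blast
  have bound: "norm (minimizer x - minimizer x0) \<le> sqrt (2 * C / \<sigma>) * norm (x - x0)"
    if x: "x \<in> fst ` \<Omega>" and "norm (x - x0) < min \<delta> r" for x
  proof -
    have "x0 - (x - x0) \<in> fst ` \<Omega>"
      using ball that by (auto simp: dist_norm subset_iff norm_minus_commute)
    then have "(G x + G x0) / 2 - G (midpoint x x0) \<le> second_difference G x0 (x - x0) / 2"
      using convex_on_midpoint_gap_le[OF convex_on_G assms(1), of "x - x0"] x by simp
    also have "\<dots> \<le> C * (norm (x - x0))\<^sup>2 / 2"
      using C that by simp
    finally have "(norm (minimizer x - minimizer x0))\<^sup>2 \<le> 2 * C / \<sigma> * (norm (x - x0))\<^sup>2"
      using G_midpoint_gap[OF x assms(1)] sigma_pos by (simp add: field_simps)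
    then show ?thesis by (rule le_sqrt_mult_if_power2_le) simp
  qed
  show ?thesis
    by (rule that[of "min \<delta> r" "sqrt (2 * C / \<sigma>)"]) (use \<open>\<delta> > 0\<close> \<open>r > 0\<close> bound in auto)
qed

lemma minimizer_calm_AE:
  "AE x0 in lebesgue. x0 \<in> fst ` \<Omega> \<longrightarrow> (\<exists>C \<delta>. \<delta> > 0 \<and> (\<forall>x \<in> fst ` \<Omega>. norm (x - x0) < \<delta> \<longrightarrow>
     norm (minimizer x - minimizer x0) \<le> C * norm (x - x0)))"
  using convex_on_second_difference_bounded_AE[OF convex_on_G open_fst_\<Omega>]
proof (rule eventually_mono, intro impI)
  fix x0
  assume "x0 \<in> fst ` \<Omega> \<longrightarrow> second_difference_bounded_at G x0" "x0 \<in> fst ` \<Omega>"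
  then obtain C \<delta> where "\<delta> > 0"
    "\<And>x. x \<in> fst ` \<Omega> \<Longrightarrow> norm (x - x0) < \<delta> \<Longrightarrow> norm (minimizer x - minimizer x0) \<le> C * norm (x - x0)"
    using minimizer_calm_if_second_difference_bounded by blast
  then show "\<exists>C \<delta>. \<delta> > 0 \<and> (\<forall>x \<in> fst ` \<Omega>. norm (x - x0) < \<delta> \<longrightarrow>
      norm (minimizer x - minimizer x0) \<le> C * norm (x - x0))"
    by blast
qed

end

theorem theorem2p5:
  fixes \<Omega> :: "('n::euclidean_space \<times> 'm::euclidean_space) set"
    and f :: "'n \<times> 'm \<Rightarrow> real"
    and \<kappa> \<sigma> :: real
  assumes "open \<Omega>" and "convex \<Omega>"
    and "\<forall>x. connected (fibre \<Omega> x)"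
    and "\<kappa> \<ge> 0" and "\<sigma> > 0"
    and "convex_on \<Omega> (\<lambda>(x, y). f (x, y) + \<kappa> / 2 * (norm x)\<^sup>2 - \<sigma> * (norm y)\<^sup>2)"
    and "\<forall>x \<in> fst ` \<Omega>. argmin_set f \<Omega> x \<noteq> {}"
  defines "g \<equiv> (\<lambda>x. INF y \<in> fibre \<Omega> x. f (x, y))"
  shows "semiconvex_on \<kappa> (fst ` \<Omega>) g \<and>
    (\<exists>\<gamma> :: 'n \<Rightarrow> 'm.
      (\<forall>x \<in> fst ` \<Omega>. argmin_set f \<Omega> x = {\<gamma> x} \<and> g x = f (x, \<gamma> x)) \<and>
      (\<forall>x0 \<in> fst ` \<Omega>. \<forall>u0 \<in> semi_subdiff \<kappa> g x0.
         \<exists>V :: ('n \<times> 'n) set. \<exists>\<phi> :: 'n \<times> 'n \<Rightarrow> 'm. \<exists>L.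
           open V \<and> (x0, u0) \<in> V \<and> L-lipschitz_on V \<phi> \<and>
           (\<forall>x u. (x, u) \<in> V \<and> x \<in> fst ` \<Omega> \<and> u \<in> semi_subdiff \<kappa> g x \<longrightarrow> \<gamma> x = \<phi> (x, u))) \<and>
      (AE x0 in lebesgue. x0 \<in> fst ` \<Omega> \<longrightarrow>
         (\<exists>C \<delta>. \<delta> > 0 \<and> (\<forall>x \<in> fst ` \<Omega>. norm (x - x0) < \<delta> \<longrightarrow>
            norm (\<gamma> x - \<gamma> x0) \<le> C * norm (x - x0)))))"
proof -
  \<comment> \<open>The fibres of the convex set \<open>\<Omega>\<close> are convex anyway.\<close>
  interpret partial_minimization \<Omega> f \<kappa> \<sigma>
    using assms(1,2,4-7) by unfold_locales
  have g: "g = marginal"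
    by (simp add: g_def marginal_def fun_eq_iff)
  obtain \<phi> L where "L-lipschitz_on UNIV \<phi>"
    and "\<forall>x u. x \<in> fst ` \<Omega> \<and> u \<in> semi_subdiff \<kappa> marginal x \<longrightarrow> minimizer x = \<phi> (x, u)"
    using minimizer_eq_lipschitz_function by blast
  then have lipschitz_near: "\<exists>V \<phi> L. open V \<and> (x0, u0) \<in> V \<and> L-lipschitz_on V \<phi> \<and>
      (\<forall>x u. (x, u) \<in> V \<and> x \<in> fst ` \<Omega> \<and> u \<in> semi_subdiff \<kappa> marginal x \<longrightarrow> minimizer x = \<phi> (x, u))"
    for x0 u0
    by (intro exI[of _ UNIV] exI[of _ \<phi>] exI[of _ L]) auto
  show ?thesis
    unfolding g
  proof (intro conjI exI[of _ minimizer])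
    show "semiconvex_on \<kappa> (fst ` \<Omega>) marginal"
      by (rule semiconvex_marginal)
    show "\<forall>x \<in> fst ` \<Omega>. argmin_set f \<Omega> x = {minimizer x} \<and> marginal x = f (x, minimizer x)"
      using argmin_eq_minimizer marginal_eq by blast
  qed (use lipschitz_near minimizer_calm_AE in blast)+
qed

end
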